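(* Let $P$ be a tree poset of height $h$ and $x\in P$, let $\varepsilon>0$, and suppose $\delta>0$ is such that for every sufficiently large $n$, every family $\mathcal F\subseteq 2^{[n]}$ with $|\mathcal F|\ge(h-1+\varepsilon)\binom{n}{\lfloor n/2\rfloor}$ contains a copy of $P(x,\delta n)$. Then for every sufficiently large $n$ there exists a function $$f:\binom{2^{[n]}}{\le |P|2^n/\delta n}\to\binom{2^{[n]}}{\le (h-1+\varepsilon)\binom{n}{\lfloor n/2\rfloor}}$$ such that for every $P$-free family $\mathcal F\subseteq 2^{[n]}$ there is a subfamily $\mathcal H\subseteq\mathcal F$ with $\mathcal H\in\binom{2^{[n]}}{\le|P|2^n/\delta n}$ and $\mathcal F\subseteq\mathcal H\cup f(\mathcal H)$.
   Context: For a set $S$ and $t\ge0$, $\binom{S}{\le t}$ denotes the set of all subsets of $S$ of size at most $t$; thus $\binom{2^{[n]}}{\le t}$ is the set of all families of subsets of $[n]$ with at most $t$ members. Posets are finite collections of finite sets ordered by inclusion. A poset homomorphism $\phi:P\to Q$ is a map with $A\subseteq B\Rightarrow \phi(A)\subseteq\phi(B)$; $Q$ contains a copy of $P$ if there is an injective poset homomorphism $P\to Q$, and is $P$-free otherwise. The Hasse diagram of $P$ is the directed graph on $P$ with an edge $A\to B$ when $A\subsetneq B$ and no $C\in P$ has $A\subsetneq C\subsetneq B$; the undirected Hasse diagram forgets orientations. A tree poset is a poset whose undirected Hasse diagram is a tree. The height is the number of elements of a longest chain. For a tree poset $P$, $x\in P$ and an integer $d\ge2$, the $d$-blow-up $P(x,d)$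 rooted at $x$ is the tree poset whose Hasse diagram is obtained as follows: each $u\in P$ at distance $\rho$ from $x$ is replaced by $d^{\rho}$ elements $u^1,\dots,u^{d^\rho}$; for each edge $uv$ of the Hasse diagram with $v$ at distance $\rho-1$ from $x$ (and $u$ at distance $\rho$), the $u^i$ are partitioned into $d^{\rho-1}$ disjoint sets $U^1,\dots,U^{d^{\rho-1}}$ of size $d$ and $v^j$ is joined to every element of $U^j$, with the same orientation as $uv$. Non-integer quantities such as $\delta n$ are rounded down. *)

theory Defs
  imports Complex_Main
begin

text \<open>Abstract finite posets are given by a carrier V and an order relation le.
  A family of sets P is the poset (P, (\<subseteq>)).\<close>

definition strict_between :: "'a set \<Rightarrow> ('a \<Rightarrow> 'a \<Rightarrow> bool) \<Rightarrow> 'a \<Rightarrow> 'a \<Rightarrow> 'a \<Rightarrow> bool" where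
  "strict_between V le a c b \<longleftrightarrow> c \<in> V \<and> le a c \<and> le c b \<and> c \<noteq> a \<and> c \<noteq> b"

definition hasse_edge :: "'a set \<Rightarrow> ('a \<Rightarrow> 'a \<Rightarrow> bool) \<Rightarrow> 'a \<Rightarrow> 'a \<Rightarrow> bool" where
  "hasse_edge V le a b \<longleftrightarrow> a \<in> V \<and> b \<in> V \<and> le a b \<and> a \<noteq> b \<and>
     \<not> (\<exists>c. strict_between V le a c b)"

definition hasse_adj :: "'a set \<Rightarrow> ('a \<Rightarrow> 'a \<Rightarrow> bool) \<Rightarrow> 'a \<Rightarrow> 'a \<Rightarrow> bool" where
  "hasse_adj V le a b \<longleftrightarrow> hasse_edge V le a b \<or> hasse_edge V le b a"

definition is_walk :: "('a \<Rightarrow> 'a \<Rightarrow> bool) \<Rightarrow> 'a list \<Rightarrow> bool" where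
  "is_walk adj vs \<longleftrightarrow> vs \<noteq> [] \<and> (\<forall>i. Suc i < length vs \<longrightarrow> adj (vs ! i) (vs ! Suc i))"

definition graph_connected :: "'a set \<Rightarrow> ('a \<Rightarrow> 'a \<Rightarrow> bool) \<Rightarrow> bool" where
  "graph_connected V adj \<longleftrightarrow>
     (\<forall>a\<in>V. \<forall>b\<in>V. \<exists>vs. is_walk adj vs \<and> hd vs = a \<and> last vs = b \<and> set vs \<subseteq> V)"

definition graph_acyclic :: "('a \<Rightarrow> 'a \<Rightarrow> bool) \<Rightarrow> bool" where
  "graph_acyclic adj \<longleftrightarrow>
     \<not> (\<exists>vs. length vs \<ge> 3 \<and> distinct vs \<and> is_walk adj vs \<and> adj (last vs) (hd vs))"

definition is_poset :: "'a set \<Rightarrow> ('a \<Rightarrow> 'a \<Rightarrow> bool) \<Rightarrow> bool" where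
  "is_poset V le \<longleftrightarrow> finite V \<and> (\<forall>a\<in>V. le a a) \<and>
     (\<forall>a\<in>V. \<forall>b\<in>V. le a b \<and> le b a \<longrightarrow> a = b) \<and>
     (\<forall>a\<in>V. \<forall>b\<in>V. \<forall>c\<in>V. le a b \<and> le b c \<longrightarrow> le a c)"

definition tree_poset :: "'a set \<Rightarrow> ('a \<Rightarrow> 'a \<Rightarrow> bool) \<Rightarrow> bool" where
  "tree_poset V le \<longleftrightarrow> is_poset V le \<and> V \<noteq> {} \<and>
     graph_connected V (hasse_adj V le) \<and> graph_acyclic (hasse_adj V le)"

definition poset_height :: "'a set \<Rightarrow> ('a \<Rightarrow> 'a \<Rightarrow> bool) \<Rightarrow> nat" where
  "poset_height V le = Max {card C | C. C \<subseteq> V \<and> (\<forall>a\<in>C. \<forall>b\<in>C. le a b \<or> le b a)}"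

definition hasse_dist :: "'a set \<Rightarrow> ('a \<Rightarrow> 'a \<Rightarrow> bool) \<Rightarrow> 'a \<Rightarrow> 'a \<Rightarrow> nat" where
  "hasse_dist V le a b = (LEAST k. \<exists>vs. is_walk (hasse_adj V le) vs \<and> hd vs = a \<and>
      last vs = b \<and> length vs = Suc k)"

text \<open>The d-blow-up P(x,d): element u at distance \<rho> from x is replaced by
  the d^\<rho> elements (u,i), i < d^\<rho>; for a Hasse edge between u (distance \<rho>)
  and v (distance \<rho>-1), (v,j) is joined to the block U^j = {(u,i). i div d = j},
  with the same orientation as the edge between u and v.\<close>
definition blowup_carrier :: "'a set \<Rightarrow> ('a \<Rightarrow> 'a \<Rightarrow> bool) \<Rightarrow> 'a \<Rightarrow> nat \<Rightarrow> ('a \<times> nat) set" where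
  "blowup_carrier V le x d = {(u, i). u \<in> V \<and> i < d ^ hasse_dist V le x u}"

definition blowup_edge :: "'a set \<Rightarrow> ('a \<Rightarrow> 'a \<Rightarrow> bool) \<Rightarrow> 'a \<Rightarrow> nat \<Rightarrow> ('a \<times> nat) \<Rightarrow> ('a \<times> nat) \<Rightarrow> bool" where
  "blowup_edge V le x d p q \<longleftrightarrow>
     p \<in> blowup_carrier V le x d \<and> q \<in> blowup_carrier V le x d \<and>
     hasse_edge V le (fst p) (fst q) \<and>
     ((hasse_dist V le x (fst p) = Suc (hasse_dist V le x (fst q)) \<and> snd p div d = snd q) \<or>
      (hasse_dist V le x (fst q) = Suc (hasse_dist V le x (fst p)) \<and> snd q div d = snd p))"

definition blowup_le :: "'a set \<Rightarrow> ('a \<Rightarrow> 'a \<Rightarrow> bool) \<Rightarrow> 'a \<Rightarrow> nat \<Rightarrow> ('a \<times> nat) \<Rightarrow> ('a \<times> nat) \<Rightarrow> bool" where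
  "blowup_le V le x d = (blowup_edge V le x d)\<^sup>*\<^sup>*"

definition contains_copy :: "'b set \<Rightarrow> ('b \<Rightarrow> 'b \<Rightarrow> bool) \<Rightarrow> 'c set set \<Rightarrow> bool" where
  "contains_copy V le F \<longleftrightarrow> (\<exists>\<phi>. inj_on \<phi> V \<and> \<phi> ` V \<subseteq> F \<and>
     (\<forall>a\<in>V. \<forall>b\<in>V. le a b \<longrightarrow> \<phi> a \<subseteq> \<phi> b))"

end

theory Submission
  imports Defs
begin

text \<open>If \<open>F\<close> is \<open>P\<close>-free, every family \<open>A\<close> that is too big to be a container holds a
  copy of the blow-up \<open>P(x,d)\<close>, along which we try to embed \<open>P\<close> greedily into \<open>F\<close>:
  the root goes to the copy of \<open>x\<close>, and every other vertex, in order of distance from \<open>x\<close>,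
  to the first of the \<open>d\<close> copies below the copy chosen for its parent that lies in \<open>F\<close>.
  As \<open>F\<close> is \<open>P\<close>-free the attempt fails, so at most \<open>|P|\<close> of the queried sets lie
  in \<open>F\<close>, and if one does then at least \<open>d + 1\<close> sets were queried.  Removing the queried
  sets from \<open>A\<close> and repeating until \<open>A\<close> is small leaves the container; the queried
  members of \<open>F\<close> form \<open>H\<close>, with \<open>|H| (d + 1) \<le> |P| 2\<^sup>n\<close>.  Every query is
  answered identically by \<open>F\<close> and by \<open>H\<close>, so running the procedure on \<open>H\<close> reproduces
  the same container: it is a function of \<open>H\<close>.\<close>

section \<open>Walks\<close>

lemma is_walk_Nil [simp]: "\<not> is_walk adj []"
  by (simp add: is_walk_def)

lemma is_walk_singleton [simp]: "is_walk adj [a]"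
  by (simp add: is_walk_def)

lemma is_walk_Cons_Cons [simp]: "is_walk adj (a # b # xs) \<longleftrightarrow> adj a b \<and> is_walk adj (b # xs)"
  unfolding is_walk_def
proof safe
  fix i assume "\<forall>i. Suc i < length (a # b # xs) \<longrightarrow> adj ((a # b # xs) ! i) ((a # b # xs) ! Suc i)"
    and "Suc i < length (b # xs)"
  then show "adj ((b # xs) ! i) ((b # xs) ! Suc i)"
    by (metis Suc_less_eq length_Cons nth_Cons_Suc)
next
  fix i assume "adj a b" "\<forall>i. Suc i < length (b # xs) \<longrightarrow> adj ((b # xs) ! i) ((b # xs) ! Suc i)"
    "Suc i < length (a # b # xs)"
  then show "adj ((a # b # xs) ! i) ((a # b # xs) ! Suc i)"
    by (cases i) auto
qed auto

lemma is_walk_append: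
  assumes "xs \<noteq> []" "ys \<noteq> []"
  shows "is_walk adj (xs @ ys) \<longleftrightarrow> is_walk adj xs \<and> is_walk adj ys \<and> adj (last xs) (hd ys)"
  using assms
proof (induction xs rule: induct_list012)
  case (2 x)
  then show ?case by (cases ys) auto
qed auto

lemma is_walk_rev:
  assumes "\<And>a b. adj a b \<Longrightarrow> adj b a"
  shows "is_walk adj (rev xs) \<longleftrightarrow> is_walk adj xs"
proof (induction xs rule: induct_list012)
  case (3 x y zs)
  have "is_walk adj (rev (x # y # zs)) \<longleftrightarrow> is_walk adj (rev (y # zs) @ [x])" by simp
  also have "\<dots> \<longleftrightarrow> is_walk adj (rev (y # zs)) \<and> adj y x"
    by (subst is_walk_append) auto
  also have "\<dots> \<longleftrightarrow> is_walk adj (x # y # zs)" using 3 assms by auto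
  finally show ?case .
qed auto

lemma is_walk_take: "is_walk adj xs \<Longrightarrow> 0 < i \<Longrightarrow> is_walk adj (take i xs)"
  unfolding is_walk_def by auto

lemma is_walk_drop: "is_walk adj xs \<Longrightarrow> i < length xs \<Longrightarrow> is_walk adj (drop i xs)"
  unfolding is_walk_def by auto

lemma in_set_drop_nth:
  assumes "z \<in> set (drop i xs)"
  shows "\<exists>j. i \<le> j \<and> j < length xs \<and> xs ! j = z"
proof -
  obtain k where "k < length (drop i xs)" "drop i xs ! k = z"
    using assms by (auto simp: in_set_conv_nth)
  then show ?thesis by (intro exI[of _ "i + k"]) auto
qed

lemma is_walk_join:
  assumes "is_walk adj xs" "is_walk adj ys" "xs \<noteq> []" "ys \<noteq> []"
    and "is_walk adj (last xs # m @ [hd ys])"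
  shows "is_walk adj (xs @ m @ ys)"
  using assms
proof (induction m arbitrary: xs)
  case Nil
  then show ?case by (simp add: is_walk_append)
next
  case (Cons z m)
  have "is_walk adj (xs @ [z])"
    using Cons.prems by (simp add: is_walk_append)
  then have "is_walk adj ((xs @ [z]) @ m @ ys)"
    using Cons by (intro Cons.IH) auto
  then show ?case by simp
qed

section \<open>Rooted tree posets\<close>

lemma hasse_edge_rtranclp_if_le:
  assumes poset: "is_poset V le" and "a \<in> V" "b \<in> V" "le a b"
  shows "(hasse_edge V le)\<^sup>*\<^sup>* a b"
  using assms(2-)
proof (induction "card {c \<in> V. le a c \<and> le c b}" arbitrary: a b rule: less_induct)
  case less
  show ?case
  proof (cases "a = b \<or> hasse_edge V le a b")
    case True
    then show ?thesis by auto
  next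
    case False
    then have "\<exists>c. strict_between V le a c b"
      using less.prems unfolding hasse_edge_def by blast
    then obtain c where c: "c \<in> V" "le a c" "le c b" "c \<noteq> a" "c \<noteq> b"
      unfolding strict_between_def by blast
    have refl: "\<And>u. u \<in> V \<Longrightarrow> le u u"
      and antisym: "\<And>u v. u \<in> V \<Longrightarrow> v \<in> V \<Longrightarrow> le u v \<Longrightarrow> le v u \<Longrightarrow> u = v"
      and trans: "\<And>u v w. u \<in> V \<Longrightarrow> v \<in> V \<Longrightarrow> w \<in> V \<Longrightarrow> le u v \<Longrightarrow> le v w \<Longrightarrow> le u w"
      using poset unfolding is_poset_def by blast+
    have fin: "finite {c \<in> V. le a c \<and> le c b}"
      using poset unfolding is_poset_def by simp
    have "{c' \<in> V. le a c' \<and> le c' c} \<subseteq> {c \<in> V. le a c \<and> le c b}"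
      using trans[of _ c b] c less.prems by auto
    moreover have "b \<notin> {c' \<in> V. le a c' \<and> le c' c}"
      using antisym[of b c] c(1,3,5) less.prems(2) by auto
    ultimately have "{c' \<in> V. le a c' \<and> le c' c} \<subset> {c \<in> V. le a c \<and> le c b}"
      using less.prems refl[of b] by blast
    then have ac: "(hasse_edge V le)\<^sup>*\<^sup>* a c"
      using less.hyps[OF psubset_card_mono[OF fin]] less.prems c by blast
    have "{c' \<in> V. le c c' \<and> le c' b} \<subseteq> {c \<in> V. le a c \<and> le c b}"
      using trans[of a c] c less.prems by auto
    moreover have "a \<notin> {c' \<in> V. le c c' \<and> le c' b}"
      using antisym[of a c] c(1,2,4) less.prems(1) by auto
    ultimately have "{c' \<in> V. le c c' \<and> le c' b} \<subset> {c \<in> V. le a c \<and> le c b}"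
      using less.prems refl[of a] by blast
    then have cb: "(hasse_edge V le)\<^sup>*\<^sup>* c b"
      using less.hyps[OF psubset_card_mono[OF fin]] less.prems c by blast
    from ac cb show ?thesis by (rule rtranclp_trans)
  qed
qed

locale rooted_tree_poset =
  fixes V :: "'a set" and le :: "'a \<Rightarrow> 'a \<Rightarrow> bool" and r :: 'a
  assumes tree: "tree_poset V le" and root_in_V: "r \<in> V"
begin

abbreviation adj :: "'a \<Rightarrow> 'a \<Rightarrow> bool" where
  "adj \<equiv> hasse_adj V le"

abbreviation level :: "'a \<Rightarrow> nat" where
  "level \<equiv> hasse_dist V le r"

definition geodesic :: "'a list \<Rightarrow> 'a \<Rightarrow> bool" where
  "geodesic vs v \<longleftrightarrow> is_walk adj vs \<and> hd vs = r \<and> last vs = v \<and> length vs = Suc (level v)"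

lemma is_poset: "is_poset V le"
  using tree unfolding tree_poset_def by blast

lemma finite_V: "finite V"
  using is_poset unfolding is_poset_def by blast

lemma adj_sym: "adj a b \<Longrightarrow> adj b a"
  unfolding hasse_adj_def by auto

lemma adj_in_V: "adj a b \<Longrightarrow> a \<in> V \<and> b \<in> V"
  unfolding hasse_adj_def hasse_edge_def by auto

lemma adj_neq: "adj a b \<Longrightarrow> a \<noteq> b"
  unfolding hasse_adj_def hasse_edge_def by auto

lemma level_le_walk:
  "is_walk adj vs \<Longrightarrow> hd vs = r \<Longrightarrow> last vs = v \<Longrightarrow> length vs = Suc k \<Longrightarrow> level v \<le> k"
  unfolding hasse_dist_def by (rule Least_le) blast

lemma geodesic_exists:
  assumes "v \<in> V"
  obtains vs where "geodesic vs v"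
proof -
  obtain vs where vs: "is_walk adj vs" "hd vs = r" "last vs = v"
    using tree root_in_V assms unfolding tree_poset_def graph_connected_def by blast
  then have "length vs = Suc (length vs - 1)" by (cases vs) auto
  with vs have "\<exists>k vs. is_walk adj vs \<and> hd vs = r \<and> last vs = v \<and> length vs = Suc k" by blast
  then have "\<exists>vs. is_walk adj vs \<and> hd vs = r \<and> last vs = v \<and> length vs = Suc (level v)"
    unfolding hasse_dist_def by (rule LeastI_ex)
  then show ?thesis using that unfolding geodesic_def by blast
qed

lemma geodesic_nth_level:
  assumes "geodesic vs v"
  shows "vs ! level v = v"
proof -
  have "vs \<noteq> []" "last vs = v" "length vs = Suc (level v)"
    using assms unfolding geodesic_def by auto
  then show ?thesis
    by (simp add: last_conv_nth)
qed

lemma level_root [simp]: "level r = 0"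
  using level_le_walk[of "[r]" r 0] by simp

lemma level_eq_0_iff: "v \<in> V \<Longrightarrow> level v = 0 \<longleftrightarrow> v = r"
proof
  assume "v \<in> V" "level v = 0"
  then obtain vs where "geodesic vs v"
    using geodesic_exists by blast
  then have "vs \<noteq> []" "hd vs = r" "vs ! 0 = v"
    using geodesic_nth_level[of vs v] \<open>level v = 0\<close> unfolding geodesic_def by auto
  then show "v = r"
    by (simp add: hd_conv_nth)
qed simp

lemma level_adj_le: "adj u w \<Longrightarrow> level w \<le> Suc (level u)"
proof -
  assume uw: "adj u w"
  obtain vs where vs: "geodesic vs u"
    using geodesic_exists adj_in_V[OF uw] by blast
  then have "vs \<noteq> []" unfolding geodesic_def by auto
  then have "is_walk adj (vs @ [w])" "hd (vs @ [w]) = r"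
    using vs uw unfolding geodesic_def by (auto simp: is_walk_append)
  then show ?thesis
    using level_le_walk[of "vs @ [w]" w "Suc (level u)"] vs unfolding geodesic_def by simp
qed

lemma level_geodesic_nth:
  assumes vs: "geodesic vs v" and i: "i < length vs"
  shows "level (vs ! i) = i"
proof -
  have walk: "is_walk adj vs" and len: "length vs = Suc (level v)" and ne: "vs \<noteq> []"
    using vs unfolding geodesic_def by auto
  have "is_walk adj (take (Suc i) vs)"
    using walk is_walk_take by blast
  moreover have "hd (take (Suc i) vs) = r"
    using vs unfolding geodesic_def by (simp add: hd_take)
  moreover have "last (take (Suc i) vs) = vs ! i"
    using i by (simp add: take_Suc_conv_app_nth)
  ultimately
  have upper: "level (vs ! i) \<le> i"
    using level_le_walk[of "take (Suc i) vs"] i by auto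
  have step: "level (vs ! j) \<le> level (vs ! i) + (j - i)" if "i \<le> j" "j < length vs" for j
    using that
  proof (induction j)
    case (Suc j)
    show ?case
    proof (cases "i = Suc j")
      case False
      then have "adj (vs ! j) (vs ! Suc j)"
        using walk Suc.prems unfolding is_walk_def by auto
      then have "level (vs ! Suc j) \<le> Suc (level (vs ! j))"
        by (rule level_adj_le)
      moreover have "level (vs ! j) \<le> level (vs ! i) + (j - i)"
        using Suc False by simp
      ultimately show ?thesis
        using Suc.prems False by linarith
    qed simp
  qed simp
  have "level v = level (vs ! (length vs - 1))"
    using geodesic_nth_level[OF vs] len by simp
  also have "\<dots> \<le> level (vs ! i) + (length vs - 1 - i)"
    using i by (intro step) auto
  finally have "level v \<le> level (vs ! i) + (level v - i)"
    using len by simp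
  then show ?thesis
    using upper len i by linarith
qed

lemma geodesic_distinct:
  assumes "geodesic vs v"
  shows "distinct vs"
  unfolding distinct_conv_nth
proof (intro allI impI)
  fix i j assume "i < length vs" "j < length vs" "i \<noteq> j"
  then show "vs ! i \<noteq> vs ! j"
    using level_geodesic_nth[OF assms, of i] level_geodesic_nth[OF assms, of j] by auto
qed

lemma level_in_geodesic_drop:
  assumes "geodesic vs v" "z \<in> set (drop i vs)"
  shows "\<exists>j. i \<le> j \<and> j \<le> level v \<and> vs ! j = z \<and> level z = j"
proof -
  obtain j where j: "i \<le> j" "j < length vs" "vs ! j = z"
    using in_set_drop_nth[OF assms(2)] by blast
  then have "level z = j"
    using level_geodesic_nth[OF assms(1)] by blast
  moreover have "j \<le> level v"
    using j(2) assms(1) unfolding geodesic_def by simp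
  ultimately show ?thesis
    using j by blast
qed

lemma geodesics_branch_point:
  assumes pa: "geodesic pa a" and pb: "geodesic pb b" and "a \<noteq> b" and "level a = level b"
  obtains i where "i < level a" "pa ! i = pb ! i" "set (drop i pa) \<inter> set (drop (Suc i) pb) = {}"
proof -
  define S where "S = {i. i \<le> level a \<and> pa ! i = pb ! i}"
  have "pa \<noteq> []" "pb \<noteq> []" "hd pa = r" "hd pb = r"
    using pa pb unfolding geodesic_def by auto
  then have "0 \<in> S"
    unfolding S_def by (simp add: hd_conv_nth[symmetric])
  define i where "i = Max S"
  have "finite S" unfolding S_def by simp
  then have iS: "i \<in> S" and i_max: "\<And>j. j \<in> S \<Longrightarrow> j \<le> i"
    using \<open>0 \<in> S\<close> Max_in Max_ge unfolding i_def by blast+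
  have "pa ! level a = a" "pb ! level a = b"
    using geodesic_nth_level[OF pa] geodesic_nth_level[OF pb] \<open>level a = level b\<close> by simp_all
  then have "i \<noteq> level a"
    using iS \<open>a \<noteq> b\<close> unfolding S_def by auto
  then have "i < level a"
    using iS unfolding S_def by simp
  moreover have "set (drop i pa) \<inter> set (drop (Suc i) pb) = {}"
  proof (rule ccontr)
    assume "set (drop i pa) \<inter> set (drop (Suc i) pb) \<noteq> {}"
    then obtain z where z: "z \<in> set (drop i pa)" "z \<in> set (drop (Suc i) pb)"
      by blast
    obtain j where j: "i \<le> j" "j \<le> level a" "pa ! j = z" "level z = j"
      using level_in_geodesic_drop[OF pa z(1)] by blast
    obtain j' where j': "Suc i \<le> j'" "pb ! j' = z" "level z = j'"
      using level_in_geodesic_drop[OF pb z(2)] by blast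
    have "j \<in> S"
      using j j' unfolding S_def by simp
    then show False
      using i_max[of j] j j' by linarith
  qed
  ultimately show ?thesis
    using that iS unfolding S_def by blast
qed

lemma no_path_through_next_level:
  assumes "a \<in> V" "b \<in> V" "a \<noteq> b" "level a = level b"
    and m: "is_walk adj (a # m @ [b])" "distinct m" "\<forall>z\<in>set m. level z = Suc (level a)"
  shows False
proof -
  obtain pa pb where pa: "geodesic pa a" and pb: "geodesic pb b"
    using geodesic_exists assms(1,2) by metis
  obtain i where i: "i < level a" "pa ! i = pb ! i"
    and disj: "set (drop i pa) \<inter> set (drop (Suc i) pb) = {}"
    using geodesics_branch_point[OF pa pb assms(3,4)] by blast
  define A where "A = drop i pa"
  define R where "R = rev (drop (Suc i) pb)"
  have len: "length pa = Suc (level a)" "length pb = Suc (level a)"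
    using pa pb assms(4) unfolding geodesic_def by auto
  have "A \<noteq> []" "R \<noteq> []" "last A = a" "hd R = b"
    using pa pb i len unfolding A_def R_def geodesic_def by (auto simp: hd_rev)
  moreover have "is_walk adj A" "is_walk adj R"
    using is_walk_drop[of adj pa i] is_walk_drop[of adj pb "Suc i"] pa pb i len
      is_walk_rev[of adj, OF adj_sym]
    unfolding A_def R_def geodesic_def by auto
  ultimately have walk: "is_walk adj (A @ m @ R)"
    using m(1) by (intro is_walk_join) auto
  have low: "level z \<le> level a" if "z \<in> set A \<union> set R" for z
    using that level_in_geodesic_drop[OF pa] level_in_geodesic_drop[OF pb] assms(4)
    unfolding A_def R_def by force
  have "distinct (A @ m @ R)"
    using geodesic_distinct[OF pa] geodesic_distinct[OF pb] m(2,3) disj low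
    unfolding A_def R_def by fastforce
  moreover have "length (A @ m @ R) \<ge> 3"
    using i len unfolding A_def R_def by simp
  moreover have "adj (pb ! Suc i) (pb ! i)"
    using pb i len adj_sym unfolding geodesic_def is_walk_def by auto
  then have "adj (last (A @ m @ R)) (hd (A @ m @ R))"
    using i len \<open>A \<noteq> []\<close> \<open>R \<noteq> []\<close>
    unfolding A_def R_def by (simp add: last_rev hd_drop_conv_nth)
  ultimately show False
    using walk tree unfolding tree_poset_def graph_acyclic_def by blast
qed

definition parent :: "'a \<Rightarrow> 'a" where
  "parent u = (SOME w. adj u w \<and> Suc (level w) = level u)"

lemma parent_adj_level:
  assumes "u \<in> V" "u \<noteq> r"
  shows "adj u (parent u) \<and> Suc (level (parent u)) = level u"
proof -
  obtain vs where vs: "geodesic vs u"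
    using geodesic_exists assms(1) by blast
  obtain k where k: "level u = Suc k"
    using level_eq_0_iff assms by (cases "level u") auto
  have "adj (vs ! k) (vs ! Suc k)"
    using vs k unfolding geodesic_def is_walk_def by auto
  moreover have "vs ! Suc k = u" "level (vs ! k) = k"
    using geodesic_nth_level[OF vs] level_geodesic_nth[OF vs, of k] vs k
    unfolding geodesic_def by auto
  ultimately have "adj u (vs ! k) \<and> Suc (level (vs ! k)) = level u"
    using k adj_sym by auto
  then show ?thesis
    unfolding parent_def by (rule someI)
qed

lemma parent_in_V: "u \<in> V \<Longrightarrow> u \<noteq> r \<Longrightarrow> parent u \<in> V"
  using parent_adj_level adj_in_V by blast

lemma parent_neq: "u \<in> V \<Longrightarrow> u \<noteq> r \<Longrightarrow> parent u \<noteq> u"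
  using parent_adj_level adj_neq by metis

lemma parent_unique:
  assumes "u \<in> V" "adj u w" "Suc (level w) = level u"
  shows "parent u = w"
proof (rule ccontr)
  assume "parent u \<noteq> w"
  have "u \<noteq> r" using assms by auto
  then have "adj (parent u) u" "Suc (level (parent u)) = level u"
    using parent_adj_level assms(1) adj_sym by auto
  then show False
    using no_path_through_next_level[of "parent u" w "[u]"] \<open>parent u \<noteq> w\<close> assms adj_in_V
    by auto
qed

lemma adj_level_cases:
  assumes "adj a b"
  shows "level a = Suc (level b) \<or> level b = Suc (level a)"
proof -
  have "level a \<noteq> level b"
    using no_path_through_next_level[of a b "[]"] assms adj_in_V adj_neq by auto
  then show ?thesis
    using level_adj_le[OF assms] level_adj_le[OF adj_sym[OF assms]] by auto
qed

end

section \<open>Greedy embedding along a blow-up\<close>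

definition candidates :: "'v \<Rightarrow> nat \<Rightarrow> ('v \<Rightarrow> 'v) \<Rightarrow> ('v \<Rightarrow> nat) \<Rightarrow> 'v \<Rightarrow> nat list" where
  "candidates r d par c u = (if u = r then [0] else map (\<lambda>t. c (par u) * d + t) [0..<d])"

definition probe :: "('v \<times> nat \<Rightarrow> bool) \<Rightarrow> 'v \<Rightarrow> nat list \<Rightarrow> ('v \<times> nat) set \<times> nat option" where
  "probe pos u cs = (Pair u ` set (takeWhile (\<lambda>j. \<not> pos (u, j)) cs), find (\<lambda>j. pos (u, j)) cs)"

text \<open>The result consists of the chosen copy index of every vertex, the set of queried copies
  and whether all vertices of \<open>us\<close> were placed.\<close>

fun greedy_embed :: "'v \<Rightarrow> nat \<Rightarrow> ('v \<Rightarrow> 'v) \<Rightarrow> ('v \<times> nat \<Rightarrow> bool) \<Rightarrow> 'v list \<Rightarrow> ('v \<Rightarrow> nat)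
    \<Rightarrow> ('v \<Rightarrow> nat) \<times> ('v \<times> nat) set \<times> bool" where
  "greedy_embed r d par pos [] c = (c, {}, True)"
| "greedy_embed r d par pos (u # us) c =
     (case probe pos u (candidates r d par c u) of
        (M, None) \<Rightarrow> (c, M, False)
      | (M, Some j) \<Rightarrow>
          (case greedy_embed r d par pos us (c(u := j)) of (c', Q, ok) \<Rightarrow> (c', M \<union> {(u, j)} \<union> Q, ok)))"

lemma candidates_nonroot:
  assumes "j \<in> set (candidates r d par c u)" "u \<noteq> r"
  obtains t where "t < d" "j = c (par u) * d + t"
proof -
  have "c (par u) * d \<le> j" "j < d + c (par u) * d"
    using assms by (auto simp: candidates_def)
  then show ?thesis
    using that[of "j - c (par u) * d"] by auto
qed

lemma probe_misses:
  assumes "probe pos u cs = (M, h)" "p \<in> M"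
  shows "p \<in> Pair u ` set cs \<and> \<not> pos p"
  using assms unfolding probe_def by (auto dest: set_takeWhileD)

lemma probe_None:
  assumes "probe pos u cs = (M, None)"
  shows "M = Pair u ` set cs"
proof -
  have "M = Pair u ` set (takeWhile (\<lambda>j. \<not> pos (u, j)) cs)" "find (\<lambda>j. pos (u, j)) cs = None"
    using assms unfolding probe_def by simp_all
  then show ?thesis
    by (simp add: find_None_iff takeWhile_eq_all_conv[THEN iffD2])
qed

lemma probe_Some:
  assumes "probe pos u cs = (M, Some j)"
  shows "j \<in> set cs \<and> pos (u, j)"
  using assms unfolding probe_def by (auto simp: find_Some_iff)

lemma probe_cong:
  assumes "probe pos u cs = (M, h)"
    and "\<forall>p\<in>M \<union> Pair u ` set_option h. pos' p = pos p"
  shows "probe pos' u cs = (M, h)"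
  using assms unfolding probe_def
  by (induction cs arbitrary: M h) (auto split: if_splits)

lemma finite_probe: "probe pos u cs = (M, h) \<Longrightarrow> finite M"
  unfolding probe_def by auto

lemma greedy_embed_ConsE:
  assumes "greedy_embed r d par pos (u # us) c = (c', Q, ok)"
  obtains (miss) M where "probe pos u (candidates r d par c u) = (M, None)"
      "c' = c" "Q = M" "\<not> ok"
  | (hit) M j Q' where "probe pos u (candidates r d par c u) = (M, Some j)"
      "greedy_embed r d par pos us (c(u := j)) = (c', Q', ok)" "Q = M \<union> {(u, j)} \<union> Q'"
proof -
  obtain M h where p: "probe pos u (candidates r d par c u) = (M, h)"
    by (cases "probe pos u (candidates r d par c u)") auto
  show ?thesis
  proof (cases h)
    case None
    then have "c' = c" "Q = M" "\<not> ok"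
      using assms p by auto
    then show ?thesis
      using miss p None by blast
  next
    case (Some j)
    obtain c1 Q1 ok1 where rec: "greedy_embed r d par pos us (c(u := j)) = (c1, Q1, ok1)"
      by (cases "greedy_embed r d par pos us (c(u := j))")
    then have "c' = c1" "ok = ok1" "Q = M \<union> {(u, j)} \<union> Q1"
      using assms p Some by auto
    then show ?thesis
      using hit p Some rec by blast
  qed
qed

lemma greedy_embed_choice_outside:
  "greedy_embed r d par pos us c = (c', Q, ok) \<Longrightarrow> v \<notin> set us \<Longrightarrow> c' v = c v"
proof (induction us arbitrary: c Q)
  case (Cons u us)
  from Cons.prems(1) show ?case
  proof (cases rule: greedy_embed_ConsE)
    case (hit M j Q')
    then show ?thesis using Cons.IH[OF hit(2)] Cons.prems(2) by simp
  qed simp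
qed simp

lemma greedy_embed_cong:
  "greedy_embed r d par pos us c = (c', Q, ok) \<Longrightarrow> \<forall>p\<in>Q. pos' p = pos p \<Longrightarrow>
    greedy_embed r d par pos' us c = (c', Q, ok)"
proof (induction us arbitrary: c Q)
  case (Cons u us)
  from Cons.prems(1) show ?case
  proof (cases rule: greedy_embed_ConsE)
    case (miss M)
    then have "probe pos' u (candidates r d par c u) = (M, None)"
      using Cons.prems(2) by (auto intro: probe_cong[OF miss(1)])
    then show ?thesis using miss by simp
  next
    case (hit M j Q')
    then have "probe pos' u (candidates r d par c u) = (M, Some j)"
      using Cons.prems(2) by (auto intro: probe_cong[OF hit(1)])
    moreover have "greedy_embed r d par pos' us (c(u := j)) = (c', Q', ok)"
      using Cons.IH[OF hit(2)] hit(3) Cons.prems(2) by blast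
    ultimately show ?thesis using hit by simp
  qed
qed simp

lemma finite_greedy_embed_queries: "greedy_embed r d par pos us c = (c', Q, ok) \<Longrightarrow> finite Q"
proof (induction us arbitrary: c Q)
  case (Cons u us)
  from Cons.prems show ?case
  proof (cases rule: greedy_embed_ConsE)
    case (miss M)
    then show ?thesis using finite_probe[OF miss(1)] by simp
  next
    case (hit M j Q')
    then show ?thesis using finite_probe[OF hit(1)] Cons.IH[OF hit(2)] by simp
  qed
qed simp

lemma card_greedy_embed_hits_le:
  "greedy_embed r d par pos us c = (c', Q, ok) \<Longrightarrow> card {p\<in>Q. pos p} \<le> length us"
proof (induction us arbitrary: c Q)
  case (Cons u us)
  from Cons.prems show ?case
  proof (cases rule: greedy_embed_ConsE)
    case (miss M)
    then have "{p\<in>Q. pos p} = {}"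
      using probe_misses[OF miss(1)] by blast
    then show ?thesis by (metis card.empty le0)
  next
    case (hit M j Q')
    then have "{p\<in>Q. pos p} \<subseteq> insert (u, j) {p\<in>Q'. pos p}"
      using probe_misses[OF hit(1)] by blast
    moreover have "finite {p\<in>Q'. pos p}"
      using finite_greedy_embed_queries[OF hit(2)] by simp
    ultimately have "card {p\<in>Q. pos p} \<le> card (insert (u, j) {p\<in>Q'. pos p})"
      by (intro card_mono) auto
    also have "\<dots> \<le> Suc (card {p\<in>Q'. pos p})"
      using \<open>finite {p\<in>Q'. pos p}\<close> by (simp add: card_insert_if)
    finally have "card {p\<in>Q. pos p} \<le> Suc (card {p\<in>Q'. pos p})" .
    then show ?thesis
      using Cons.IH[OF hit(2)] by simp
  qed
qed simp

lemma greedy_embed_failure_block: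
  assumes "greedy_embed r d par pos us c = (c', Q, False)" "r \<notin> set us"
  shows "\<exists>u\<in>set us. \<exists>b. (\<lambda>t. (u, b * d + t)) ` {..<d} \<subseteq> Q"
  using assms
proof (induction us arbitrary: c Q)
  case (Cons u us)
  from Cons.prems(1) show ?case
  proof (cases rule: greedy_embed_ConsE)
    case (miss M)
    have "Q = Pair u ` set (candidates r d par c u)"
      using probe_None[OF miss(1)] miss(3) by simp
    then have "(\<lambda>t. (u, c (par u) * d + t)) ` {..<d} \<subseteq> Q"
      using Cons.prems(2) by (auto simp: candidates_def)
    then show ?thesis by auto
  next
    case (hit M j Q')
    then show ?thesis
      using Cons.IH[of "c(u := j)" Q'] Cons.prems(2) by fastforce
  qed
qed simp

lemma greedy_embed_success:
  assumes "greedy_embed r d par pos us c = (c', Q, True)"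
    and "distinct us" "sorted_wrt (\<lambda>a b. a \<noteq> r \<longrightarrow> par a \<noteq> b) us"
    and "\<forall>u\<in>set us. u \<noteq> r \<longrightarrow> par u \<noteq> u"
  shows "\<forall>u\<in>set us. (u, c' u) \<in> Q \<and> pos (u, c' u) \<and> (u \<noteq> r \<longrightarrow> c' u div d = c' (par u))"
  using assms
proof (induction us arbitrary: c Q)
  case (Cons u us)
  from Cons.prems(1) show ?case
  proof (cases rule: greedy_embed_ConsE)
    case (hit M j Q')
    have IH: "\<forall>w\<in>set us. (w, c' w) \<in> Q' \<and> pos (w, c' w) \<and> (w \<noteq> r \<longrightarrow> c' w div d = c' (par w))"
      using Cons.IH[OF hit(2)] Cons.prems(2-4) by simp
    have j: "c' u = j" "j \<in> set (candidates r d par c u)" "pos (u, j)"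
      using greedy_embed_choice_outside[OF hit(2)] probe_Some[OF hit(1)] Cons.prems(2) by auto
    have "c' u div d = c' (par u)" if ur: "u \<noteq> r"
    proof -
      obtain t where "t < d" "j = c (par u) * d + t"
        using candidates_nonroot[OF j(2) ur] .
      moreover have "c' (par u) = c (par u)"
        using greedy_embed_choice_outside[OF hit(2), of "par u"] Cons.prems(3,4) ur by auto
      ultimately show ?thesis using j(1) by simp
    qed
    then show ?thesis using IH hit(3) j by auto
  qed simp
qed simp

lemma greedy_embed_root_query:
  assumes "greedy_embed r d par pos (r # us) c = (c', Q, ok)"
  shows "(r, 0) \<in> Q"
proof -
  have cands: "candidates r d par c r = [0]"
    by (simp add: candidates_def)
  from assms show ?thesis
  proof (cases rule: greedy_embed_ConsE)
    case (miss M)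
    then show ?thesis using probe_None[OF miss(1)] cands by simp
  next
    case (hit M j Q')
    then show ?thesis using probe_Some[OF hit(1)] cands by simp
  qed
qed

lemma greedy_embed_root_failure:
  assumes "greedy_embed r d par pos (r # us) c = (c', Q, False)" "r \<notin> set us" "\<exists>p\<in>Q. pos p"
  shows "\<exists>u b. u \<noteq> r \<and> insert (r, 0) ((\<lambda>t. (u, b * d + t)) ` {..<d}) \<subseteq> Q"
  using assms(1)
proof (cases rule: greedy_embed_ConsE)
  case (miss M)
  then show ?thesis
    using assms(3) probe_misses[OF miss(1)] by simp
next
  case (hit M j Q')
  obtain u b where "u \<in> set us" "(\<lambda>t. (u, b * d + t)) ` {..<d} \<subseteq> Q'"
    using greedy_embed_failure_block[OF hit(2) assms(2)] by blast
  moreover have "u \<noteq> r"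
    using \<open>u \<in> set us\<close> assms(2) by blast
  ultimately show ?thesis
    using hit(3) greedy_embed_root_query[OF assms(1)] by blast
qed

lemma candidate_below_power:
  assumes "j \<in> set (candidates r d par c u)" "lv r = 0"
    and "u \<noteq> r \<Longrightarrow> Suc (lv (par u)) = lv u \<and> c (par u) < d ^ lv (par u)"
  shows "j < d ^ lv u"
proof (cases "u = r")
  case True
  then show ?thesis using assms(1,2) by (simp add: candidates_def)
next
  case False
  obtain t where t: "t < d" "j = c (par u) * d + t"
    using candidates_nonroot[OF assms(1) False] .
  have "c (par u) * d + t < Suc (c (par u)) * d"
    using t(1) by simp
  also have "\<dots> \<le> d ^ lv (par u) * d"
    using assms(3)[OF False] by (intro mult_le_mono1) simp
  finally show ?thesis
    using assms(3)[OF False] t(2) by (simp add: power_Suc2[symmetric])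
qed

lemma greedy_embed_queries_in_levels:
  assumes "greedy_embed r d par pos us c = (c', Q, ok)"
    and "\<forall>u\<in>set us. u \<in> V \<and> (u \<noteq> r \<longrightarrow> par u \<in> V \<and> Suc (lv (par u)) = lv u)"
    and "lv r = 0" "\<forall>v\<in>V. 0 < d \<longrightarrow> c v < d ^ lv v"
  shows "\<forall>p\<in>Q. fst p \<in> V \<and> snd p < d ^ lv (fst p)"
  using assms
proof (induction us arbitrary: c Q)
  case (Cons u us)
  have below: "j < d ^ lv u" if "j \<in> set (candidates r d par c u)" for j
    using Cons.prems that
    by (intro candidate_below_power[of j r d par c u lv]) (auto simp: candidates_def)
  from Cons.prems(1) show ?case
  proof (cases rule: greedy_embed_ConsE)
    case (miss M)
    then have "Q = Pair u ` set (candidates r d par c u)"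
      using probe_None by simp
    then show ?thesis
      using below Cons.prems(2) by auto
  next
    case (hit M j Q')
    have "j \<in> set (candidates r d par c u)"
      using probe_Some[OF hit(1)] by blast
    then have "\<forall>v\<in>V. 0 < d \<longrightarrow> (c(u := j)) v < d ^ lv v"
      using Cons.prems(4) below by simp
    moreover have "\<forall>w\<in>set us. w \<in> V \<and> (w \<noteq> r \<longrightarrow> par w \<in> V \<and> Suc (lv (par w)) = lv w)"
      using Cons.prems(2) by simp
    ultimately have "\<forall>p\<in>Q'. fst p \<in> V \<and> snd p < d ^ lv (fst p)"
      using Cons.IH[OF hit(2) _ Cons.prems(3)] by blast
    moreover have "M \<union> {(u, j)} \<subseteq> Pair u ` set (candidates r d par c u)"
      using probe_misses[OF hit(1)] \<open>j \<in> set (candidates r d par c u)\<close> by blast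
    then have "\<forall>p\<in>M \<union> {(u, j)}. fst p \<in> V \<and> snd p < d ^ lv (fst p)"
      using below Cons.prems(2) by auto
    ultimately show ?thesis
      unfolding hit(3) by (simp only: ball_Un)
  qed
qed simp

section \<open>Containers from local query strategies\<close>

fun peel :: "('s set \<Rightarrow> 's set \<Rightarrow> 's set) \<Rightarrow> ('s set \<Rightarrow> bool) \<Rightarrow> nat \<Rightarrow> 's set \<Rightarrow> 's set \<Rightarrow> 's set" where
  "peel st big 0 A F = A"
| "peel st big (Suc k) A F = (if big A then peel st big k (A - st A F) F else A)"

lemma peel_subset: "peel st big k A F \<subseteq> A"
proof (induction k arbitrary: A)
  case (Suc k)
  then show ?case
    using Diff_subset[of A "st A F"] by (auto simp del: Diff_subset)
qed simp

lemma not_big_peel: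
  assumes st: "\<And>A F. A \<subseteq> U \<Longrightarrow> big A \<Longrightarrow> st A F \<noteq> {} \<and> st A F \<subseteq> A" and "finite U"
  shows "A \<subseteq> U \<Longrightarrow> card A < k \<Longrightarrow> \<not> big (peel st big k A F)"
proof (induction k arbitrary: A)
  case (Suc k)
  show ?case
  proof (cases "big A")
    case True
    have "finite A"
      using finite_subset[OF Suc.prems(1) \<open>finite U\<close>] .
    moreover have "A - st A F \<subset> A"
      using st[OF Suc.prems(1) True] by blast
    ultimately have "card (A - st A F) < k"
      using psubset_card_mono[of A "A - st A F"] Suc.prems(2) by linarith
    moreover have "A - st A F \<subseteq> U"
      using Suc.prems(1) by blast
    ultimately have "\<not> big (peel st big k (A - st A F) F)"
      using Suc.IH by blast
    then show ?thesis
      using True by simp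
  qed simp
qed simp

lemma peel_cong:
  assumes st: "\<And>A F. A \<subseteq> U \<Longrightarrow> big A \<Longrightarrow> st A F \<subseteq> A"
    and cong: "\<And>A F F'. A \<subseteq> U \<Longrightarrow> big A \<Longrightarrow> \<forall>G\<in>st A F. G \<in> F \<longleftrightarrow> G \<in> F' \<Longrightarrow> st A F' = st A F"
  shows "A \<subseteq> U \<Longrightarrow> \<forall>G\<in>A - peel st big k A F. G \<in> F \<longleftrightarrow> G \<in> F' \<Longrightarrow>
    peel st big k A F' = peel st big k A F"
proof (induction k arbitrary: A)
  case (Suc k)
  show ?case
  proof (cases "big A")
    case True
    define S where "S = st A F"
    have rest: "peel st big (Suc k) A F = peel st big k (A - S) F"
      using True unfolding S_def by simp
    have "S \<subseteq> A"
      using st[OF Suc.prems(1) True] unfolding S_def .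
    moreover have "peel st big k (A - S) F \<subseteq> A - S"
      by (rule peel_subset)
    ultimately have "\<forall>G\<in>S. G \<in> F \<longleftrightarrow> G \<in> F'"
      using Suc.prems(2) unfolding rest by blast
    then have "st A F' = S"
      using cong[OF Suc.prems(1) True] unfolding S_def by blast
    have "A - S \<subseteq> U"
      using Suc.prems(1) by blast
    moreover have "\<forall>G\<in>A - S - peel st big k (A - S) F. G \<in> F \<longleftrightarrow> G \<in> F'"
      using Suc.prems(2) unfolding rest by blast
    ultimately have "peel st big k (A - S) F' = peel st big k (A - S) F"
      by (rule Suc.IH)
    then show ?thesis
      using True rest \<open>st A F' = S\<close> by simp
  qed simp
qed simp

lemma card_peeled_le:
  assumes st: "\<And>A. A \<subseteq> U \<Longrightarrow> big A \<Longrightarrow> st A F \<subseteq> A \<and> card (st A F \<inter> F) * m \<le> p * card (st A F)"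
    and "finite U"
  shows "A \<subseteq> U \<Longrightarrow> card (F \<inter> (A - peel st big k A F)) * m \<le> p * card (A - peel st big k A F)"
proof (induction k arbitrary: A)
  case (Suc k)
  show ?case
  proof (cases "big A")
    case True
    define S where "S = st A F"
    define R where "R = peel st big k (A - S) F"
    have "S \<subseteq> A" and cost_S: "card (S \<inter> F) * m \<le> p * card S"
      using st[OF Suc.prems True] unfolding S_def by auto
    have "R \<subseteq> A - S"
      unfolding R_def by (rule peel_subset)
    have "finite A"
      using finite_subset[OF Suc.prems(1) \<open>finite U\<close>] .
    have "A - S \<subseteq> U"
      using Suc.prems by blast
    from Suc.IH[OF this] have IH: "card (F \<inter> (A - S - R)) * m \<le> p * card (A - S - R)"
      unfolding R_def .
    have split: "A - R = S \<union> (A - S - R)" "F \<inter> (A - R) = (S \<inter> F) \<union> (F \<inter> (A - S - R))"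
      using \<open>S \<subseteq> A\<close> \<open>R \<subseteq> A - S\<close> by blast+
    have "finite S" "finite (A - S - R)"
      using \<open>finite A\<close> \<open>S \<subseteq> A\<close> finite_subset[of S A] by auto
    then have "card (A - R) = card S + card (A - S - R)"
      unfolding split(1) by (rule card_Un_disjoint) auto
    moreover have "card (F \<inter> (A - R)) = card (S \<inter> F) + card (F \<inter> (A - S - R))"
      unfolding split(2) using \<open>finite S\<close> \<open>finite (A - S - R)\<close> by (intro card_Un_disjoint) auto
    ultimately have "card (F \<inter> (A - R)) * m \<le> p * card (A - R)"
      using cost_S IH by (simp add: algebra_simps)
    moreover have "peel st big (Suc k) A F = R"
      using True unfolding R_def S_def by simp
    ultimately show ?thesis
      by (simp only:)
  qed simp
qed simp

lemma container_from_local_queries: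
  assumes "finite U"
    and st: "\<And>A F. A \<subseteq> U \<Longrightarrow> big A \<Longrightarrow> st A F \<noteq> {} \<and> st A F \<subseteq> A"
    and cong: "\<And>A F F'. A \<subseteq> U \<Longrightarrow> big A \<Longrightarrow> \<forall>G\<in>st A F. G \<in> F \<longleftrightarrow> G \<in> F' \<Longrightarrow> st A F' = st A F"
    and cost: "\<And>A F. A \<subseteq> U \<Longrightarrow> big A \<Longrightarrow> good F \<Longrightarrow> card (st A F \<inter> F) * m \<le> p * card (st A F)"
  shows "\<exists>f. (\<forall>H. f H \<subseteq> U \<and> \<not> big (f H)) \<and>
    (\<forall>F. F \<subseteq> U \<longrightarrow> good F \<longrightarrow> (\<exists>H\<subseteq>F. card H * m \<le> p * card U \<and> F \<subseteq> H \<union> f H))"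
proof -
  define f where "f = (\<lambda>H. peel st big (Suc (card U)) U H)"
  have st_sub: "\<And>A F. A \<subseteq> U \<Longrightarrow> big A \<Longrightarrow> st A F \<subseteq> A"
    using st by blast
  have "f H \<subseteq> U" for H
    unfolding f_def by (rule peel_subset)
  moreover have "\<not> big (f H)" for H
    unfolding f_def by (rule not_big_peel[where U = U and big = big and st = st, OF st \<open>finite U\<close> order_refl lessI])
  moreover have "\<exists>H\<subseteq>F. card H * m \<le> p * card U \<and> F \<subseteq> H \<union> f H" if "F \<subseteq> U" "good F" for F
  proof -
    define H where "H = F - f F"
    have "\<forall>G\<in>U - f F. G \<in> F \<longleftrightarrow> G \<in> H"
      unfolding H_def by blast
    then have "f H = f F"
      unfolding f_def using peel_cong[where U = U and big = big and st = st and A = U and F = F and F' = H]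
        st_sub cong by blast
    have "st A F \<subseteq> A \<and> card (st A F \<inter> F) * m \<le> p * card (st A F)" if "A \<subseteq> U" "big A" for A
      using st_sub[OF that] cost[OF that \<open>good F\<close>] by blast
    from card_peeled_le[where U = U and big = big and st = st and F = F, OF this \<open>finite U\<close> order_refl]
    have "card (F \<inter> (U - f F)) * m \<le> p * card (U - f F)"
      unfolding f_def .
    also have "\<dots> \<le> p * card U"
      using \<open>finite U\<close> by (intro mult_le_mono2 card_mono) auto
    also have "F \<inter> (U - f F) = H"
      using \<open>F \<subseteq> U\<close> unfolding H_def by blast
    finally have "card H * m \<le> p * card U" .
    moreover have "H \<subseteq> F" "F \<subseteq> H \<union> f H"
      using \<open>f H = f F\<close> unfolding H_def by auto
    ultimately show ?thesis
      by blast
  qed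
  ultimately show ?thesis
    by blast
qed

section \<open>The container lemma for tree posets\<close>

lemma real_le_divide_floor:
  fixes \<delta> :: real
  assumes "\<delta> > 0" "n \<ge> 1" "k * (nat \<lfloor>\<delta> * real n\<rfloor> + 1) \<le> M"
  shows "real k \<le> real M / (\<delta> * real n)"
proof -
  have "\<delta> * real n < real (nat \<lfloor>\<delta> * real n\<rfloor>) + 1"
    using assms(1) by linarith
  then have "real k * (\<delta> * real n) \<le> real k * (real (nat \<lfloor>\<delta> * real n\<rfloor>) + 1)"
    by (intro mult_left_mono) auto
  also have "\<dots> \<le> real M"
    using assms(3) by (metis of_nat_Suc of_nat_le_iff of_nat_mult add.commute plus_1_eq_Suc)
  finally show ?thesis
    using assms(1,2) by (simp add: pos_le_divide_eq)
qed

definition poset_embedding :: "'b set \<Rightarrow> ('b \<Rightarrow> 'b \<Rightarrow> bool) \<Rightarrow> ('b \<Rightarrow> 'c set) \<Rightarrow> bool" where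
  "poset_embedding V le \<phi> \<longleftrightarrow> inj_on \<phi> V \<and> (\<forall>a\<in>V. \<forall>b\<in>V. le a b \<longrightarrow> \<phi> a \<subseteq> \<phi> b)"

lemma contains_copy_iff_embedding:
  "contains_copy V le F \<longleftrightarrow> (\<exists>\<phi>. poset_embedding V le \<phi> \<and> \<phi> ` V \<subseteq> F)"
  unfolding contains_copy_def poset_embedding_def by blast

lemma rtranclp_map:
  "R\<^sup>*\<^sup>* a b \<Longrightarrow> (\<And>s t. R s t \<Longrightarrow> S (g s) (g t)) \<Longrightarrow> S\<^sup>*\<^sup>* (g a) (g b)"
  by (induction rule: rtranclp_induct) (auto intro: rtranclp.rtrancl_into_rtrancl)

context rooted_tree_poset
begin

lemma blowup_edge_consistent_choice:
  assumes carrier: "\<forall>u\<in>V. (u, c u) \<in> blowup_carrier V le r d"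
    and consistent: "\<forall>u\<in>V - {r}. c u div d = c (parent u)"
    and edge: "hasse_edge V le s t"
  shows "blowup_edge V le r d (s, c s) (t, c t)"
proof -
  have st: "adj s t" "s \<in> V" "t \<in> V"
    using edge adj_in_V unfolding hasse_adj_def by auto
  have "level s = Suc (level t) \<and> c s div d = c t \<or> level t = Suc (level s) \<and> c t div d = c s"
  proof (cases "level s = Suc (level t)")
    case True
    then have "s \<noteq> r" "parent s = t"
      using parent_unique[OF st(2,1)] by auto
    then show ?thesis using True consistent st by auto
  next
    case False
    then have "level t = Suc (level s)"
      using adj_level_cases[OF st(1)] by simp
    moreover from this have "t \<noteq> r" "parent t = s"
      using parent_unique[OF st(3) adj_sym[OF st(1)]] by auto
    ultimately show ?thesis using consistent st by auto
  qed
  then show ?thesis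
    unfolding blowup_edge_def using carrier st edge by auto
qed

lemma contains_copy_if_consistent_choice:
  assumes \<phi>: "poset_embedding (blowup_carrier V le r d) (blowup_le V le r d) \<phi>"
    and carrier: "\<forall>u\<in>V. (u, c u) \<in> blowup_carrier V le r d"
    and in_F: "\<forall>u\<in>V. \<phi> (u, c u) \<in> F"
    and consistent: "\<forall>u\<in>V - {r}. c u div d = c (parent u)"
  shows "contains_copy V le F"
proof -
  define \<psi> where "\<psi> u = (u, c u)" for u
  have "blowup_le V le r d (\<psi> a) (\<psi> b)" if "a \<in> V" "b \<in> V" "le a b" for a b
  proof -
    have "(hasse_edge V le)\<^sup>*\<^sup>* a b"
      using hasse_edge_rtranclp_if_le[OF is_poset that] .
    then show ?thesis
      unfolding blowup_le_def \<psi>_def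
      using blowup_edge_consistent_choice[OF carrier consistent] by (rule rtranclp_map)
  qed
  moreover have "inj_on (\<phi> \<circ> \<psi>) V"
  proof (rule inj_onI)
    fix a b assume "a \<in> V" "b \<in> V" "(\<phi> \<circ> \<psi>) a = (\<phi> \<circ> \<psi>) b"
    moreover have "inj_on \<phi> (blowup_carrier V le r d)"
      using \<phi> unfolding poset_embedding_def by blast
    ultimately have "(a, c a) = (b, c b)"
      using carrier unfolding \<psi>_def comp_def by (metis inj_onD)
    then show "a = b"
      by simp
  qed
  ultimately have "poset_embedding V le (\<phi> \<circ> \<psi>)"
    using \<phi> carrier unfolding poset_embedding_def \<psi>_def by auto
  moreover have "(\<phi> \<circ> \<psi>) ` V \<subseteq> F"
    using in_F unfolding \<psi>_def by auto
  ultimately show ?thesis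
    unfolding contains_copy_iff_embedding by blast
qed

definition nonroot_order :: "'a list" where
  "nonroot_order = (SOME xs. distinct xs \<and> set xs = V - {r} \<and> sorted_wrt (\<lambda>a b. level a \<le> level b) xs)"

lemma nonroot_order:
  "distinct nonroot_order" "set nonroot_order = V - {r}"
  "sorted_wrt (\<lambda>a b. level a \<le> level b) nonroot_order"
proof -
  have "finite (V - {r})"
    using finite_V by simp
  then obtain xs where "distinct xs" "set xs = V - {r}"
    using finite_distinct_list by blast
  moreover have "sorted_wrt (\<lambda>a b. level a \<le> level b) (sort_key level xs)"
    using sorted_sort_key[of level xs] by (simp only: sorted_map)
  ultimately have "\<exists>xs. distinct xs \<and> set xs = V - {r} \<and> sorted_wrt (\<lambda>a b. level a \<le> level b) xs"
    by (intro exI[of _ "sort_key level xs"]) simp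
  then show "distinct nonroot_order" "set nonroot_order = V - {r}"
    "sorted_wrt (\<lambda>a b. level a \<le> level b) nonroot_order"
    unfolding nonroot_order_def by (metis (mono_tags, lifting) someI_ex)+
qed

lemma parent_not_later:
  "sorted_wrt (\<lambda>a b. a \<noteq> r \<longrightarrow> parent a \<noteq> b) (r # nonroot_order)"
proof -
  have "parent a \<noteq> b" if "a \<in> V - {r}" "level a \<le> level b" for a b
    using parent_adj_level that by force
  then show ?thesis
    using nonroot_order sorted_wrt_mono_rel[of _ "\<lambda>a b. level a \<le> level b"] by force
qed

definition greedy_run :: "nat \<Rightarrow> ('a \<times> nat \<Rightarrow> bool) \<Rightarrow> ('a \<Rightarrow> nat) \<times> ('a \<times> nat) set \<times> bool" where
  "greedy_run d pos = greedy_embed r d parent pos (r # nonroot_order) (\<lambda>_. 0)"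

definition queries :: "nat \<Rightarrow> ('a \<times> nat \<Rightarrow> 'c) \<Rightarrow> 'c set \<Rightarrow> ('a \<times> nat) set" where
  "queries d \<phi> F = fst (snd (greedy_run d (\<lambda>p. \<phi> p \<in> F)))"

lemma greedy_run_cases:
  obtains c Q ok where "greedy_run d pos = (c, Q, ok)"
  by (cases "greedy_run d pos") auto

lemma queries_subset_blowup_carrier: "queries d \<phi> F \<subseteq> blowup_carrier V le r d"
proof -
  obtain c Q ok where run: "greedy_run d (\<lambda>p. \<phi> p \<in> F) = (c, Q, ok)"
    by (rule greedy_run_cases)
  have "\<forall>u\<in>set (r # nonroot_order). u \<in> V \<and> (u \<noteq> r \<longrightarrow> parent u \<in> V \<and> Suc (level (parent u)) = level u)"
    using nonroot_order root_in_V parent_in_V parent_adj_level by auto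
  moreover have "\<forall>v\<in>V. 0 < d \<longrightarrow> (\<lambda>_. 0::nat) v < d ^ level v"
    by simp
  ultimately have "\<forall>p\<in>Q. fst p \<in> V \<and> snd p < d ^ level (fst p)"
    using greedy_embed_queries_in_levels[OF run[unfolded greedy_run_def]] level_root by blast
  then show ?thesis
    using run unfolding queries_def blowup_carrier_def by auto
qed

lemma root_in_queries: "(r, 0) \<in> queries d \<phi> F"
  using greedy_embed_root_query[of r d parent _ nonroot_order "\<lambda>_. 0"]
  unfolding queries_def greedy_run_def by (metis prod.collapse)

lemma finite_queries: "finite (queries d \<phi> F)"
  using finite_greedy_embed_queries[of r d parent _ "r # nonroot_order" "\<lambda>_. 0"]
  unfolding queries_def greedy_run_def by (metis prod.collapse)

lemma queries_cong:
  assumes "\<forall>p\<in>queries d \<phi> F. \<phi> p \<in> F' \<longleftrightarrow> \<phi> p \<in> F"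
  shows "queries d \<phi> F' = queries d \<phi> F"
proof -
  obtain c Q ok where run: "greedy_run d (\<lambda>p. \<phi> p \<in> F) = (c, Q, ok)"
    by (rule greedy_run_cases)
  moreover have "\<forall>p\<in>Q. \<phi> p \<in> F' \<longleftrightarrow> \<phi> p \<in> F"
    using assms run unfolding queries_def by simp
  ultimately have "greedy_run d (\<lambda>p. \<phi> p \<in> F') = (c, Q, ok)"
    unfolding greedy_run_def by (rule greedy_embed_cong)
  then show ?thesis
    using run unfolding queries_def by simp
qed

lemma card_queries_hits_le: "card {p \<in> queries d \<phi> F. \<phi> p \<in> F} \<le> card V"
proof -
  obtain c Q ok where run: "greedy_run d (\<lambda>p. \<phi> p \<in> F) = (c, Q, ok)"
    by (rule greedy_run_cases)
  then have "card {p \<in> Q. \<phi> p \<in> F} \<le> length (r # nonroot_order)"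
    unfolding greedy_run_def by (rule card_greedy_embed_hits_le)
  also have "length (r # nonroot_order) = card V"
    using nonroot_order distinct_card[of "r # nonroot_order"] root_in_V by (simp add: insert_absorb)
  finally show ?thesis
    using run unfolding queries_def by simp
qed

lemma card_queries_ge_if_hit:
  assumes \<phi>: "poset_embedding (blowup_carrier V le r d) (blowup_le V le r d) \<phi>"
    and free: "\<not> contains_copy V le F"
    and hit: "\<exists>p\<in>queries d \<phi> F. \<phi> p \<in> F"
  shows "Suc d \<le> card (queries d \<phi> F)"
proof -
  obtain c Q ok where run: "greedy_run d (\<lambda>p. \<phi> p \<in> F) = (c, Q, ok)"
    by (rule greedy_run_cases)
  have "\<not> ok"
  proof
    assume ok
    then have "greedy_embed r d parent (\<lambda>p. \<phi> p \<in> F) (r # nonroot_order) (\<lambda>_. 0) = (c, Q, True)"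
      using run unfolding greedy_run_def by simp
    moreover have "distinct (r # nonroot_order)" "\<forall>u\<in>set (r # nonroot_order). u \<noteq> r \<longrightarrow> parent u \<noteq> u"
      using nonroot_order parent_neq by auto
    ultimately have "\<forall>u\<in>set (r # nonroot_order). (u, c u) \<in> Q \<and> \<phi> (u, c u) \<in> F \<and>
        (u \<noteq> r \<longrightarrow> c u div d = c (parent u))"
      using parent_not_later by (intro greedy_embed_success)
    then have "\<forall>u\<in>V. (u, c u) \<in> Q \<and> \<phi> (u, c u) \<in> F \<and> (u \<noteq> r \<longrightarrow> c u div d = c (parent u))"
      using nonroot_order root_in_V by auto
    moreover have "Q \<subseteq> blowup_carrier V le r d"
      using queries_subset_blowup_carrier[of d \<phi> F] run unfolding queries_def by simp
    ultimately have "contains_copy V le F"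
      using contains_copy_if_consistent_choice[OF \<phi>, of c F] by blast
    then show False using free by contradiction
  qed
  then have "greedy_embed r d parent (\<lambda>p. \<phi> p \<in> F) (r # nonroot_order) (\<lambda>_. 0) = (c, Q, False)"
    using run unfolding greedy_run_def by simp
  moreover have "r \<notin> set nonroot_order"
    using nonroot_order by simp
  moreover have "\<exists>p\<in>Q. \<phi> p \<in> F"
    using hit run unfolding queries_def by simp
  ultimately have "\<exists>u b. u \<noteq> r \<and> insert (r, 0) ((\<lambda>t. (u, b * d + t)) ` {..<d}) \<subseteq> Q"
    by (rule greedy_embed_root_failure)
  then obtain u b where "u \<noteq> r" "insert (r, 0) ((\<lambda>t. (u, b * d + t)) ` {..<d}) \<subseteq> Q"
    by blast
  moreover have "card (insert (r, 0) ((\<lambda>t. (u, b * d + t)) ` {..<d})) = Suc d"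
    using \<open>u \<noteq> r\<close> by (subst card_insert_disjoint) (auto simp: card_image inj_on_def)
  moreover have "finite Q"
    using finite_greedy_embed_queries[OF run[unfolded greedy_run_def]] .
  ultimately have "Suc d \<le> card Q"
    by (metis card_mono)
  then show ?thesis
    using run unfolding queries_def by simp
qed

lemma queries_cost:
  assumes \<phi>: "poset_embedding (blowup_carrier V le r d) (blowup_le V le r d) \<phi>"
    and free: "\<not> contains_copy V le F"
  shows "card (\<phi> ` queries d \<phi> F \<inter> F) * (d + 1) \<le> card V * card (\<phi> ` queries d \<phi> F)"
proof -
  let ?Q = "queries d \<phi> F"
  have "inj_on \<phi> (blowup_carrier V le r d)"
    using \<phi> unfolding poset_embedding_def by blast
  then have "inj_on \<phi> ?Q"
    using queries_subset_blowup_carrier by (rule inj_on_subset)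
  then have card_image_Q: "card (\<phi> ` ?Q) = card ?Q"
    by (rule card_image)
  have "\<phi> ` ?Q \<inter> F = \<phi> ` {p \<in> ?Q. \<phi> p \<in> F}"
    by blast
  moreover have "card (\<phi> ` {p \<in> ?Q. \<phi> p \<in> F}) \<le> card {p \<in> ?Q. \<phi> p \<in> F}"
    using finite_queries[of d \<phi> F] by (intro card_image_le) simp
  ultimately have "card (\<phi> ` ?Q \<inter> F) \<le> card V"
    using card_queries_hits_le[of d \<phi> F] by simp
  show ?thesis
  proof (cases "\<exists>p\<in>?Q. \<phi> p \<in> F")
    case True
    then have "Suc d \<le> card ?Q"
      using card_queries_ge_if_hit[OF \<phi> free] by blast
    then have "card (\<phi> ` ?Q \<inter> F) * (d + 1) \<le> card V * card ?Q"
      using \<open>card (\<phi> ` ?Q \<inter> F) \<le> card V\<close> by (intro mult_le_mono) simp_all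
    then show ?thesis
      using card_image_Q by simp
  next
    case False
    then have "\<phi> ` ?Q \<inter> F = {}"
      by blast
    then show ?thesis by simp
  qed
qed

lemma blowup_container_function:
  fixes U :: "'c set set"
  assumes "finite U"
    and copies: "\<And>A. A \<subseteq> U \<Longrightarrow> big A \<Longrightarrow> contains_copy (blowup_carrier V le r d) (blowup_le V le r d) A"
  shows "\<exists>f. (\<forall>H. f H \<subseteq> U \<and> \<not> big (f H)) \<and>
    (\<forall>F. F \<subseteq> U \<longrightarrow> \<not> contains_copy V le F \<longrightarrow>
      (\<exists>H\<subseteq>F. card H * (d + 1) \<le> card V * card U \<and> F \<subseteq> H \<union> f H))"
proof -
  define copy where "copy A = (SOME \<phi>. poset_embedding (blowup_carrier V le r d) (blowup_le V le r d) \<phi> \<and>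
      \<phi> ` blowup_carrier V le r d \<subseteq> A)" for A :: "'c set set"
  have copy: "poset_embedding (blowup_carrier V le r d) (blowup_le V le r d) (copy A)"
      "copy A ` blowup_carrier V le r d \<subseteq> A" if "A \<subseteq> U" "big A" for A :: "'c set set"
    using someI_ex[OF copies[OF that, unfolded contains_copy_iff_embedding]]
    unfolding copy_def by blast+
  define st where "st A F = copy A ` queries d (copy A) F" for A F
  show ?thesis
  proof (rule container_from_local_queries[OF \<open>finite U\<close>])
    show "st A F \<noteq> {} \<and> st A F \<subseteq> A" if "A \<subseteq> U" "big A" for A F
      using root_in_queries queries_subset_blowup_carrier copy(2)[OF that] unfolding st_def by blast
    show "st A F' = st A F" if "A \<subseteq> U" "big A" "\<forall>G\<in>st A F. G \<in> F \<longleftrightarrow> G \<in> F'" for A F F'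
      using queries_cong[of d "copy A" F F'] that(3) unfolding st_def by auto
    show "card (st A F \<inter> F) * (d + 1) \<le> card V * card (st A F)"
      if "A \<subseteq> U" "big A" "\<not> contains_copy V le F" for A F
      using queries_cost[OF copy(1)[OF that(1,2)] that(3)] unfolding st_def .
  qed
qed

lemma container_function_for_cube:
  fixes \<delta> B :: real
  assumes delta: "\<delta> > 0" and "n \<ge> 1"
    and copies: "\<And>F. F \<subseteq> Pow {1..n} \<Longrightarrow> B \<le> real (card F) \<Longrightarrow>
      contains_copy (blowup_carrier V le r (nat \<lfloor>\<delta> * real n\<rfloor>)) (blowup_le V le r (nat \<lfloor>\<delta> * real n\<rfloor>)) F"
  shows "\<exists>f :: nat set set \<Rightarrow> nat set set.
     (\<forall>H. H \<subseteq> Pow {1..n} \<and> real (card H) \<le> real (card V) * 2 ^ n / (\<delta> * real n)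
        \<longrightarrow> f H \<subseteq> Pow {1..n} \<and> real (card (f H)) \<le> B) \<and>
     (\<forall>F. F \<subseteq> Pow {1..n} \<and> \<not> contains_copy V le F \<longrightarrow>
        (\<exists>H. H \<subseteq> F \<and> real (card H) \<le> real (card V) * 2 ^ n / (\<delta> * real n) \<and> F \<subseteq> H \<union> f H))"
proof -
  define d where "d = nat \<lfloor>\<delta> * real n\<rfloor>"
  obtain f where f: "\<forall>H. f H \<subseteq> Pow {1..n} \<and> \<not> B \<le> real (card (f H))"
    and cover: "\<forall>F. F \<subseteq> Pow {1..n} \<longrightarrow> \<not> contains_copy V le F \<longrightarrow>
      (\<exists>H\<subseteq>F. card H * (d + 1) \<le> card V * card (Pow {1..n}) \<and> F \<subseteq> H \<union> f H)"
    using blowup_container_function[of "Pow {1..n}" "\<lambda>A. B \<le> real (card A)" d] copies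
    unfolding d_def by auto
  have "card (Pow {1..n}) = 2 ^ n"
    using card_Pow[of "{1..n}"] by simp
  have small_H: "\<exists>H. H \<subseteq> F \<and> real (card H) \<le> real (card V) * 2 ^ n / (\<delta> * real n) \<and> F \<subseteq> H \<union> f H"
    if F: "F \<subseteq> Pow {1..n}" "\<not> contains_copy V le F" for F
  proof -
    obtain H where H: "H \<subseteq> F" "card H * (d + 1) \<le> card V * 2 ^ n" "F \<subseteq> H \<union> f H"
      using cover[rule_format, OF F] \<open>card (Pow {1..n}) = 2 ^ n\<close> by auto
    from real_le_divide_floor[OF delta \<open>n \<ge> 1\<close> H(2)[unfolded d_def]]
    have "real (card H) \<le> real (card V) * 2 ^ n / (\<delta> * real n)"
      by simp
    with H show ?thesis
      by (intro exI[of _ H]) simp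
  qed
  show ?thesis
  proof (intro exI[of _ f] conjI allI impI)
    fix H
    show "f H \<subseteq> Pow {1..n}"
      using f by blast
    have "\<not> B \<le> real (card (f H))"
      using f by blast
    then show "real (card (f H)) \<le> B"
      by simp
  next
    fix F assume "F \<subseteq> Pow {1..n} \<and> \<not> contains_copy V le F"
    then show "\<exists>H. H \<subseteq> F \<and> real (card H) \<le> real (card V) * 2 ^ n / (\<delta> * real n) \<and> F \<subseteq> H \<union> f H"
      using small_H by blast
  qed
qed

end

theorem lemma3p1:
  fixes P :: "'a set set" and x :: "'a set" and \<epsilon> \<delta> :: real
  assumes finP: "finite P" and finElems: "\<forall>A\<in>P. finite A"
    and tree: "tree_poset P (\<subseteq>)"
    and xP: "x \<in> P"
    and eps: "\<epsilon> > 0" and delta: "\<delta> > 0"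
    and hyp: "\<exists>N. \<forall>n\<ge>N. \<forall>F. F \<subseteq> Pow {1..n} \<and>
        real (card F) \<ge> (real (poset_height P (\<subseteq>)) - 1 + \<epsilon>) * real (n choose (n div 2))
        \<longrightarrow> contains_copy (blowup_carrier P (\<subseteq>) x (nat \<lfloor>\<delta> * real n\<rfloor>))
                          (blowup_le P (\<subseteq>) x (nat \<lfloor>\<delta> * real n\<rfloor>)) F"
  shows "\<exists>N. \<forall>n\<ge>N. \<exists>f :: nat set set \<Rightarrow> nat set set.
     (\<forall>H. H \<subseteq> Pow {1..n} \<and> real (card H) \<le> real (card P) * 2 ^ n / (\<delta> * real n)
        \<longrightarrow> f H \<subseteq> Pow {1..n} \<and>
            real (card (f H)) \<le> (real (poset_height P (\<subseteq>)) - 1 + \<epsilon>) * real (n choose (n div 2))) \<and>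
     (\<forall>F. F \<subseteq> Pow {1..n} \<and> \<not> contains_copy P (\<subseteq>) F \<longrightarrow>
        (\<exists>H. H \<subseteq> F \<and> real (card H) \<le> real (card P) * 2 ^ n / (\<delta> * real n) \<and>
             F \<subseteq> H \<union> f H))"
proof -
  interpret rooted_tree_poset P "(\<subseteq>)" x
    using tree xP by unfold_locales
  obtain N where N: "\<And>n F. n \<ge> N \<Longrightarrow> F \<subseteq> Pow {1..n} \<Longrightarrow>
      (real (poset_height P (\<subseteq>)) - 1 + \<epsilon>) * real (n choose (n div 2)) \<le> real (card F) \<Longrightarrow>
      contains_copy (blowup_carrier P (\<subseteq>) x (nat \<lfloor>\<delta> * real n\<rfloor>))
        (blowup_le P (\<subseteq>) x (nat \<lfloor>\<delta> * real n\<rfloor>)) F"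
    using hyp by blast
  show ?thesis
    by (intro exI[of _ "max N 1"] allI impI container_function_for_cube[OF delta] N) simp_all
qed

end
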